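(* Under the standing assumptions, define for real $z\in[0,n]$ $$\Phi_c(z)=\frac{\Gamma(n+1)}{\Gamma(z+1)\Gamma(n-z+1)}\left(\frac1d\right)^{z}\left(1-\frac1d\right)^{n-z}f\!\left(\frac zn\right)^{rm},$$ where $\Gamma$ is the Gamma function. Then $\Phi_c(\omega)=\Phi(\omega)$ for $\omega=1,2,\dots,n$, and, for all sufficiently large $n$, $\Phi_c'(z)<0$ for all $z\in(n\eta_1,n\eta_2)$.
   Context: Parameters: integer $k\ge2$, constants $\alpha>0$, $r>0$, $0<p<1$; $d=n^{\alpha}$ (treated as an integer), $m=n\ln d$, $\tau=\frac1{1-p}$, $r_{cr}=\frac1{\ln\tau}$. Standing assumptions: $(2k-1)\alpha>1$, $k\alpha\le1$, $k\ge\frac{\tau\ln\tau}{\tau-1}$, and $r<r_{cr}$. Notation: $f(s)=1+\frac{p}{1-p}\cdot\frac{s^k-d^{-k}}{1-d^{-k}}$ for $s\in[0,1]$; $B(S)=\binom{n}{S}\left(\frac1d\right)^{S}\left(1-\frac1d\right)^{n-S}$; $W(S)=f(S/n)^{rm}$; $\Phi(S)=B(S)W(S)$. Let $\lambda>0$ be a fixed constant and $\eta_1=\frac1d+\frac{\lambda}{n^{1-(k-1)\alpha}\ln d}$. Let $\alpha_0=\frac{(2k-1)\alpha-1}{2(k-1)}$, and let $\eta_2,\eta_3,\mu$ be constants with $0<\eta_2<\eta_3<1$, $\alpha_0/\alpha-\mu\eta_2^{k-1}>0$, $\mu>\frac{kpr}{1-p}$, and $r\ln(1-p)+\eta_3>0$.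 *)

theory Defs
  imports "HOL-Analysis.Analysis"
begin

definition dd :: "real \<Rightarrow> nat \<Rightarrow> real" where
  "dd \<alpha> n = real n powr \<alpha>"

definition mm :: "real \<Rightarrow> nat \<Rightarrow> real" where
  "mm \<alpha> n = real n * ln (dd \<alpha> n)"

definition tau :: "real \<Rightarrow> real" where
  "tau p = 1 / (1 - p)"

definition r_cr :: "real \<Rightarrow> real" where
  "r_cr p = 1 / ln (tau p)"

definition ff :: "nat \<Rightarrow> real \<Rightarrow> real \<Rightarrow> nat \<Rightarrow> real \<Rightarrow> real" where
  "ff k p \<alpha> n s = 1 + p / (1 - p) * ((s ^ k - (1 / dd \<alpha> n) ^ k) / (1 - (1 / dd \<alpha> n) ^ k))"

definition BB :: "real \<Rightarrow> nat \<Rightarrow> nat \<Rightarrow> real" where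
  "BB \<alpha> n S = real (n choose S) * (1 / dd \<alpha> n) ^ S * (1 - 1 / dd \<alpha> n) ^ (n - S)"

definition WW :: "nat \<Rightarrow> real \<Rightarrow> real \<Rightarrow> real \<Rightarrow> nat \<Rightarrow> nat \<Rightarrow> real" where
  "WW k p r \<alpha> n S = ff k p \<alpha> n (real S / real n) powr (r * mm \<alpha> n)"

definition Phi :: "nat \<Rightarrow> real \<Rightarrow> real \<Rightarrow> real \<Rightarrow> nat \<Rightarrow> nat \<Rightarrow> real" where
  "Phi k p r \<alpha> n S = BB \<alpha> n S * WW k p r \<alpha> n S"

definition Phic :: "nat \<Rightarrow> real \<Rightarrow> real \<Rightarrow> real \<Rightarrow> nat \<Rightarrow> real \<Rightarrow> real" where
  "Phic k p r \<alpha> n z =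
     Gamma (real n + 1) / (Gamma (z + 1) * Gamma (real n - z + 1))
     * (1 / dd \<alpha> n) powr z * (1 - 1 / dd \<alpha> n) powr (real n - z)
     * ff k p \<alpha> n (z / real n) powr (r * mm \<alpha> n)"

definition eta1 :: "nat \<Rightarrow> real \<Rightarrow> real \<Rightarrow> nat \<Rightarrow> real" where
  "eta1 k \<alpha> lam n = 1 / dd \<alpha> n + lam / (real n powr (1 - (real k - 1) * \<alpha>) * ln (dd \<alpha> n))"

definition alpha0 :: "nat \<Rightarrow> real \<Rightarrow> real" where
  "alpha0 k \<alpha> = ((2 * real k - 1) * \<alpha> - 1) / (2 * (real k - 1))"

end

theory Submission
  imports Defs "HOL-Real_Asymp.Real_Asymp"
begin

text \<open>
  On (0, n) the function Phi_c is exp E with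
  E z = ln Gamma (n+1) - ln Gamma (z+1) - ln Gamma (n-z+1) + z ln (1/d) + (n-z) ln (1-1/d) + r m ln f (z/n),
  and E' z = psi (n-z+1) - psi (z+1) - ln (d-1) + r m f'(s) / (n f(s)) with s = z/n.
  The digamma bounds psi x \<le> ln x \<le> psi (x+1) bound the first three terms by 2/n - ln (s d),
  and the last one is at most A ln d s^(k-1) with A = 2kpr/(1-p). So E' z < 0 as soon as
  A ln d s^(k-1) < ln (s d) - 2/n, which is checked in three regimes of s:
  for s \<le> 2/d we have s d \<ge> 1 + \<delta> with \<delta> of order n^(k\<alpha>-1)/ln n, which beats ln d (2/d)^(k-1)
  because (2k-1)\<alpha> > 1; for 2/d < s \<le> d^(-\<beta>) we have ln (s d) > ln 2 while ln d d^(-\<beta>) \<rightarrow> 0;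
  for s > d^(-\<beta>) we have ln (s d) > (1-\<beta>) ln d, while A \<eta>2^(k-1) \<le> 1 - 2\<beta> by the choice of \<beta>,
  which is possible because A \<eta>2^(k-1) < 2 alpha0/\<alpha> \<le> 1.
\<close>

lemma Digamma_le_ln_le_Digamma_plus1:
  fixes x :: real
  assumes x: "x > 0"
  shows "Digamma x \<le> ln x" "ln x \<le> Digamma (x + 1)"
proof -
  have "\<exists>\<xi>. x < \<xi> \<and> \<xi> < x + 1 \<and> ln_Gamma (x + 1) - ln_Gamma x = (x + 1 - x) * Digamma \<xi>"
    using x by (intro MVT2) (auto intro!: has_field_derivative_ln_Gamma_real)
  then obtain \<xi> where \<xi>: "x < \<xi>" "\<xi> < x + 1" "ln_Gamma (x + 1) - ln_Gamma x = Digamma \<xi>"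
    by auto
  have "Gamma (x + 1) = x * Gamma x"
    using x by (intro Gamma_plus1) (auto elim!: nonpos_Ints_cases)
  then have "ln_Gamma (x + 1) = ln (x * Gamma x)"
    using x by (simp add: ln_Gamma_real_pos)
  also have "\<dots> = ln x + ln (Gamma x)"
    using x by (intro ln_mult_pos) auto
  finally have "Digamma \<xi> = ln x"
    using \<xi>(3) x by (simp add: ln_Gamma_real_pos)
  then show "Digamma x \<le> ln x" "ln x \<le> Digamma (x + 1)"
    using Digamma_real_mono[of x \<xi>] Digamma_real_mono[of \<xi> "x + 1"] \<xi> x by auto
qed

lemma Phic_of_nat:
  assumes "n \<ge> 2" "\<alpha> > 0" "\<omega> \<le> n"
  shows "Phic k p r \<alpha> n (real \<omega>) = Phi k p r \<alpha> n \<omega>"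
proof -
  have d: "dd \<alpha> n > 1"
    using assms unfolding dd_def by (intro gr_one_powr) auto
  have "Gamma (real n + 1) / (Gamma (real \<omega> + 1) * Gamma (real n - real \<omega> + 1)) = real (n choose \<omega>)"
  proof -
    have "Gamma (real m + 1) = fact m" for m
      using Gamma_fact[of m, where 'a = real] by (simp add: add.commute)
    from this[of n] this[of \<omega>] this[of "n - \<omega>"] show ?thesis
      using assms(3) by (simp add: binomial_fact)
  qed
  moreover have "(1 - 1 / dd \<alpha> n) powr (real n - real \<omega>) = (1 - 1 / dd \<alpha> n) ^ (n - \<omega>)"
    using d assms(3) powr_realpow[of "1 - 1 / dd \<alpha> n" "n - \<omega>"] by simp
  moreover have "(1 / dd \<alpha> n) powr real \<omega> = (1 / dd \<alpha> n) ^ \<omega>"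
    using d by (simp add: powr_realpow)
  ultimately show ?thesis
    unfolding Phic_def Phi_def BB_def WW_def by simp
qed

definition ff_deriv :: "nat \<Rightarrow> real \<Rightarrow> real \<Rightarrow> nat \<Rightarrow> real \<Rightarrow> real" where
  "ff_deriv k p \<alpha> n s = p / (1 - p) * (real k * s ^ (k - 1) / (1 - (1 / dd \<alpha> n) ^ k))"

lemma ff_has_real_derivative: "(ff k p \<alpha> n has_real_derivative ff_deriv k p \<alpha> n s) (at s)"
proof -
  \<comment> \<open>Since x / 0 = 0, this also covers the degenerate case (1 / dd \<alpha> n) ^ k = 1.\<close>
  define c where "c = p / (1 - p) / (1 - (1 / dd \<alpha> n) ^ k)"
  have "ff k p \<alpha> n = (\<lambda>s. 1 + c * (s ^ k - (1 / dd \<alpha> n) ^ k))"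
    by (simp add: fun_eq_iff ff_def c_def)
  moreover have "ff_deriv k p \<alpha> n s = c * (real k * s ^ (k - 1))"
    by (simp add: ff_deriv_def c_def)
  ultimately show ?thesis
    by (auto intro!: derivative_eq_intros)
qed

definition Phic_logderiv :: "nat \<Rightarrow> real \<Rightarrow> real \<Rightarrow> real \<Rightarrow> nat \<Rightarrow> real \<Rightarrow> real" where
  "Phic_logderiv k p r \<alpha> n z =
     Digamma (real n - z + 1) - Digamma (z + 1) - ln (dd \<alpha> n - 1)
     + r * mm \<alpha> n * ff_deriv k p \<alpha> n (z / real n) / (real n * ff k p \<alpha> n (z / real n))"

lemma Phic_has_real_derivative:
  assumes n: "n > 0" and d: "dd \<alpha> n > 1" and f: "\<And>s. s \<ge> 0 \<Longrightarrow> ff k p \<alpha> n s > 0"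
    and z: "0 < z" "z < real n"
  shows "(Phic k p r \<alpha> n has_real_derivative Phic k p r \<alpha> n z * Phic_logderiv k p r \<alpha> n z) (at z)"
proof -
  define E where "E y = ln_Gamma (real n + 1) - ln_Gamma (y + 1) - ln_Gamma (real n - y + 1)
      + y * ln (1 / dd \<alpha> n) + (real n - y) * ln (1 - 1 / dd \<alpha> n)
      + r * mm \<alpha> n * ln (ff k p \<alpha> n (y / real n))" for y
  have Phic_exp: "Phic k p r \<alpha> n y = exp (E y)" if "0 < y" "y < real n" for y
    using that d f[of "y / real n"]
    by (simp add: Phic_def E_def Gamma_real_pos_exp powr_def exp_add exp_diff)
  have "1 - 1 / dd \<alpha> n = (dd \<alpha> n - 1) / dd \<alpha> n"
    using d by (simp add: field_simps)
  then have "ln (1 / dd \<alpha> n) - ln (1 - 1 / dd \<alpha> n) = - ln (dd \<alpha> n - 1)"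
    using d by (simp add: ln_div)
  then have "(E has_real_derivative Phic_logderiv k p r \<alpha> n z) (at z)"
    unfolding E_def Phic_logderiv_def using z n f[of "z / real n"]
    by (auto intro!: derivative_eq_intros ff_has_real_derivative[THEN DERIV_chain2]
        simp: mult_ac)
  then have "((\<lambda>y. exp (E y)) has_real_derivative Phic k p r \<alpha> n z * Phic_logderiv k p r \<alpha> n z) (at z)"
    using DERIV_chain2[OF DERIV_exp] Phic_exp[OF z] by simp
  then show ?thesis
    by (rule has_field_derivative_transform_within_open[where S = "{0<..<real n}"])
      (use z Phic_exp in auto)
qed

lemma ff_pos:
  assumes p: "0 < p" "p < 1" and t: "(1 / dd \<alpha> n) ^ k < 1 - p" and s: "s \<ge> 0"
  shows "ff k p \<alpha> n s > 0"
proof -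
  define t where "t = (1 / dd \<alpha> n) ^ k"
  have t0: "t \<ge> 0"
    by (simp add: t_def dd_def)
  have t1: "t < 1 - p"
    using t by (simp add: t_def)
  have "p / (1 - p) * (- t / (1 - t)) \<le> p / (1 - p) * ((s ^ k - t) / (1 - t))"
    using p t1 s by (intro mult_left_mono divide_right_mono) auto
  moreover have "p / (1 - p) * (t / (1 - t)) < 1"
  proof -
    have "p * t < (1 - p) * (1 - t)"
      using t1 by (simp add: algebra_simps)
    then have "p * t / ((1 - p) * (1 - t)) < 1"
      using p t1 by (subst divide_less_eq) (auto intro: mult_pos_pos)
    then show ?thesis
      by simp
  qed
  ultimately show ?thesis
    by (simp add: ff_def t_def[symmetric])
qed

lemma Phic_pos:
  assumes "dd \<alpha> n > 1" "ff k p \<alpha> n (z / real n) > 0" "0 < z" "z < real n"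
  shows "Phic k p r \<alpha> n z > 0"
  using assms by (simp add: Phic_def)

lemma ff_logderiv_le:
  assumes n: "n > 0" and r: "r \<ge> 0" and p: "0 \<le> p" "p < 1" and d: "dd \<alpha> n \<ge> 1"
    and t: "(1 / dd \<alpha> n) ^ k \<le> 1 / 2" and s: "1 / dd \<alpha> n \<le> s"
  shows "r * mm \<alpha> n * ff_deriv k p \<alpha> n s / (real n * ff k p \<alpha> n s)
           \<le> 2 * (real k * p * r / (1 - p)) * ln (dd \<alpha> n) * s ^ (k - 1)"
proof -
  define t where "t = (1 / dd \<alpha> n) ^ k"
  have s0: "s \<ge> 0"
    using s d by (smt (verit) divide_nonneg_nonneg)
  have "t \<le> s ^ k"
    unfolding t_def using s d by (intro power_mono) auto
  then have f1: "ff k p \<alpha> n s \<ge> 1"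
    using p t by (simp add: ff_def t_def[symmetric])
  have f': "0 \<le> ff_deriv k p \<alpha> n s"
    using p t s0 by (simp add: ff_deriv_def t_def[symmetric])
  have "1 / (1 - t) \<le> 2"
    using t by (simp add: t_def divide_le_eq)
  then have "p / (1 - p) * (real k * s ^ (k - 1)) * (1 / (1 - t))
             \<le> p / (1 - p) * (real k * s ^ (k - 1)) * 2"
    using p s0 by (intro mult_left_mono) auto
  then have "ff_deriv k p \<alpha> n s \<le> p / (1 - p) * (real k * s ^ (k - 1) * 2)"
    by (simp add: ff_deriv_def t_def)
  have "r * mm \<alpha> n * ff_deriv k p \<alpha> n s / (real n * ff k p \<alpha> n s)
        = r * ln (dd \<alpha> n) * (ff_deriv k p \<alpha> n s / ff k p \<alpha> n s)"
    using n by (simp add: mm_def)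
  also have "\<dots> \<le> r * ln (dd \<alpha> n) * ff_deriv k p \<alpha> n s"
    using r d f1 f' by (intro mult_left_mono) (auto simp: divide_le_eq mult_le_cancel_left1)
  also have "\<dots> \<le> r * ln (dd \<alpha> n) * (p / (1 - p) * (real k * s ^ (k - 1) * 2))"
    using r d \<open>ff_deriv k p \<alpha> n s \<le> _\<close> by (intro mult_left_mono) auto
  finally show ?thesis
    by (simp add: field_simps)
qed

lemma ln_mult_dominates_power:
  fixes A d e s \<delta> \<beta> \<eta> :: real and j :: nat
  assumes A: "A \<ge> 0" and d: "d > 1" and j: "j \<ge> 1" and \<delta>: "\<delta> > 0"
    and s: "(1 + \<delta>) / d < s" "s < \<eta>" "\<eta> \<le> 1"
    and small: "A * ln d * (2 / d) ^ j < \<delta> / 2 - e"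
    and middle: "A * ln d * d powr (- \<beta>) < ln 2 - e"
    and large: "A * \<eta> ^ j \<le> 1 - 2 * \<beta>" "e < \<beta> * ln d"
  shows "A * ln d * s ^ j < ln (s * d) - e"
proof -
  have sd: "1 + \<delta> < s * d"
    using s(1) d by (simp add: field_simps)
  have s0: "0 < s"
    using zero_less_mult_pos2[of s d] sd d \<delta> by linarith
  have A_ln: "A * ln d \<ge> 0"
    using A d by simp
  consider "s \<le> 2 / d" | "2 / d < s" "s \<le> d powr (- \<beta>)" | "d powr (- \<beta>) < s"
    by linarith
  then show ?thesis
  proof cases
    case 1
    have "A * ln d * s ^ j \<le> A * ln d * (2 / d) ^ j"
      using 1 s0 A_ln by (intro mult_left_mono power_mono) auto
    moreover have "\<delta> / 2 < ln (s * d)"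
    proof -
      define x where "x = s * d"
      have x: "1 + \<delta> < x" "x \<le> 2"
        using sd 1 d by (simp_all add: x_def field_simps)
      have "(x - 1) / 2 \<le> (x - 1) / x"
        using x \<delta> by (intro divide_left_mono) auto
      also have "\<dots> = 1 - 1 / x"
        using x \<delta> by (simp add: field_simps)
      also have "\<dots> \<le> ln x"
        using ln_le_minus_one[of "1 / x"] x \<delta> by (simp add: ln_div)
      finally show ?thesis
        using x by (simp add: x_def)
    qed
    ultimately show ?thesis
      using small by linarith
  next
    case 2
    have "s ^ j \<le> s"
      using power_decreasing[of 1 j s] j s0 s(2,3) by simp
    then have "A * ln d * s ^ j \<le> A * ln d * d powr (- \<beta>)"
      using 2 A_ln by (intro mult_left_mono) auto
    moreover have "ln 2 < ln (s * d)"
      using 2 d by (simp add: field_simps)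
    ultimately show ?thesis
      using middle by linarith
  next
    case 3
    have "A * ln d * s ^ j \<le> A * ln d * \<eta> ^ j"
      using s0 s(2) A_ln by (intro mult_left_mono power_mono) auto
    also have "\<dots> \<le> (1 - 2 * \<beta>) * ln d"
      using large(1) d by (simp add: mult.commute mult_right_mono)
    finally have "A * ln d * s ^ j \<le> (1 - 2 * \<beta>) * ln d" .
    moreover have "- \<beta> * ln d < ln s"
      using 3 d s0 ln_less_cancel_iff[of "d powr (- \<beta>)" s] by simp
    ultimately show ?thesis
      using large(2) d s0 by (simp add: ln_mult algebra_simps)
  qed
qed

lemma ln_scaled_le_ln_ratio:
  fixes n d z :: real
  assumes n: "n > 0" and d: "d \<ge> 2" and z: "n < z * d" "z < n"
  shows "ln (z * d / n) - 2 / n \<le> ln z + ln (d - 1) - ln (n - z + 1)"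
proof -
  have "ln ((n - z + 1) * d) - ln (n * (d - 1)) \<le> ((n - z + 1) * d - n * (d - 1)) / (n * (d - 1))"
    using n d z by (intro ln_diff_le) auto
  also have "\<dots> \<le> 2 / n"
  proof -
    have "n + 2 \<le> d + z * d"
      using d z by linarith
    then have "n * (n + 2) \<le> n * (d + z * d)"
      using n by (intro mult_left_mono) auto
    then show ?thesis
      using n d by (simp add: field_simps)
  qed
  moreover have "z > 0"
    using zero_less_mult_pos2[of z d] n d z by linarith
  ultimately show ?thesis
    using n d z by (simp add: ln_mult ln_div)
qed

lemma Phic_has_negative_derivative:
  fixes A z \<delta> \<beta> \<eta> :: real
  assumes n: "real n \<ge> 2" and d: "dd \<alpha> n \<ge> 2" and k: "k \<ge> 2" and r: "r > 0"
    and p: "0 < p" "p < 1" and t: "(1 / dd \<alpha> n) ^ k < (1 - p) / 2"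
    and A: "A = 2 * (real k * p * r / (1 - p))" and \<delta>: "\<delta> > 0" and \<eta>: "\<eta> \<le> 1"
    and small: "A * ln (dd \<alpha> n) * (2 / dd \<alpha> n) ^ (k - 1) < \<delta> / 2 - 2 / real n"
    and middle: "A * ln (dd \<alpha> n) * dd \<alpha> n powr (- \<beta>) < ln 2 - 2 / real n"
    and large: "A * \<eta> ^ (k - 1) \<le> 1 - 2 * \<beta>" "2 / real n < \<beta> * ln (dd \<alpha> n)"
    and z: "real n * (1 + \<delta>) / dd \<alpha> n < z" "z < real n * \<eta>"
  shows "\<exists>D. (Phic k p r \<alpha> n has_real_derivative D) (at z) \<and> D < 0"
proof -
  define d where "d = dd \<alpha> n"
  define s where "s = z / real n"
  have s: "(1 + \<delta>) / d < s" "s < \<eta>"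
    using z n by (simp_all add: s_def d_def field_simps)
  have d_pos: "d > 0"
    using d by (simp add: d_def)
  have s_lower: "1 / d < s"
    using s(1) \<delta> d_pos divide_strict_right_mono[of 1 "1 + \<delta>" d] by linarith
  moreover have "0 < 1 / d"
    using d_pos by simp
  ultimately have "0 < s" "s < 1"
    using s(2) \<eta> by linarith+
  then have z_pos: "0 < z" "z < real n"
    using n by (simp_all add: s_def field_simps)
  have f_pos: "ff k p \<alpha> n s > 0" if "s \<ge> 0" for s
    using ff_pos[OF p _ that] t p by simp
  have "Phic_logderiv k p r \<alpha> n z < 0"
  proof -
    have "r * mm \<alpha> n * ff_deriv k p \<alpha> n s / (real n * ff k p \<alpha> n s) \<le> A * ln d * s ^ (k - 1)"
      using ff_logderiv_le[of n r p \<alpha> k s] n r p t d s_lower A by (simp add: d_def less_imp_le)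
    also have "\<dots> < ln (s * d) - 2 / real n"
      using ln_mult_dominates_power[OF _ _ _ \<delta> s \<eta>, of A "k - 1"] small middle large A p r k d
      by (simp add: d_def)
    also have "\<dots> \<le> ln z + ln (d - 1) - ln (real n - z + 1)"
    proof -
      have "real n < z * d"
        using s_lower n d_pos by (simp add: s_def field_simps)
      then show ?thesis
        using ln_scaled_le_ln_ratio[of "real n" d z] z_pos n d by (simp add: s_def d_def)
    qed
    finally show ?thesis
      using Digamma_le_ln_le_Digamma_plus1[of z] Digamma_le_ln_le_Digamma_plus1[of "real n - z + 1"] z_pos
      unfolding Phic_logderiv_def s_def d_def by simp
  qed
  moreover have "Phic k p r \<alpha> n z > 0"
    using z_pos d f_pos[of "z / real n"] by (intro Phic_pos) auto
  ultimately show ?thesis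
    using Phic_has_real_derivative[of n \<alpha> k p z r] z_pos d f_pos
    by (intro exI[of _ "Phic k p r \<alpha> n z * Phic_logderiv k p r \<alpha> n z"]) (simp add: mult_pos_neg)
qed

lemma eventually_ln_powr_sum_lt_1:
  fixes c1 c2 e1 e2 :: real
  assumes "e1 > 0" "e2 > 0"
  shows "eventually (\<lambda>x. c1 * (ln x * x powr (- e1)) + c2 * (ln x ^ 2 * x powr (- e2)) < 1) at_top"
proof -
  have "((\<lambda>x. c1 * (ln x * x powr (- e1)) + c2 * (ln x ^ 2 * x powr (- e2))) \<longlongrightarrow> 0) at_top"
    using assms by (intro tendsto_add_zero tendsto_mult_right_zero) real_asymp+
  then show ?thesis
    by (rule order_tendstoD) simp
qed

lemma eventually_small_regime:
  fixes a l A :: real and k :: nat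
  assumes a: "a > 0" and l: "l > 0" and A: "A \<ge> 0" and k: "k \<ge> 1"
    and ak: "(2 * real k - 1) * a > 1"
  shows "eventually (\<lambda>x. A * ln (x powr a) * (2 / x powr a) ^ (k - 1)
           < x powr a * (l / (x powr (1 - (real k - 1) * a) * ln (x powr a))) / 2 - 2 / x) at_top"
proof -
  define c1 where "c1 = 4 * a / l"
  define c2 where "c2 = 2 * A * a\<^sup>2 * 2 ^ (k - 1) / l"
  have "eventually (\<lambda>x. c1 * (ln x * x powr (- (real k * a)))
      + c2 * (ln x ^ 2 * x powr (- ((2 * real k - 1) * a - 1))) < 1) at_top"
    using a k ak by (intro eventually_ln_powr_sum_lt_1) auto
  moreover have "eventually (\<lambda>x. x > (1::real)) at_top"
    by (rule eventually_gt_at_top)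
  ultimately show ?thesis
  proof eventually_elim
    case (elim x)
    define L where "L = ln x"
    \<comment> \<open>T is \<delta> / 2, and the two other terms are T times quantities tending to 0.\<close>
    define T where "T = l / (2 * a * L) * x powr (real k * a - 1)"
    have L: "L > 0"
      using elim(2) by (simp add: L_def)
    have T: "T > 0"
      using l a L elim(2) by (simp add: T_def)
    have "x powr a * (l / (x powr (1 - (real k - 1) * a) * ln (x powr a))) / 2 = T"
      using elim(2) a L by (simp add: T_def L_def powr_diff powr_add field_simps)
    moreover have "2 / x = T * (c1 * (ln x * x powr (- (real k * a))))"
      using elim(2) a L l by (simp add: T_def c1_def L_def field_simps powr_diff powr_minus)
    moreover have "A * ln (x powr a) * (2 / x powr a) ^ (k - 1)
        = T * (c2 * (ln x ^ 2 * x powr (- ((2 * real k - 1) * a - 1))))"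
    proof -
      have "(x powr a) ^ (k - 1) = x powr ((real k - 1) * a)"
        using elim(2) k by (simp add: powr_realpow[symmetric] powr_powr mult.commute)
      then have "(2 / x powr a) ^ (k - 1) = 2 ^ (k - 1) * x powr (- ((real k - 1) * a))"
        by (simp add: power_divide powr_minus divide_inverse power_inverse)
      moreover have "x powr (real k * a - 1) * x powr (- ((2 * real k - 1) * a - 1))
          = x powr (- ((real k - 1) * a))"
        by (simp add: powr_add[symmetric] algebra_simps)
      ultimately show ?thesis
        using elim(2) a L l by (simp add: T_def c2_def L_def power2_eq_square field_simps)
    qed
    ultimately show ?case
      using mult_strict_left_mono[OF elim(1) T] by (simp add: algebra_simps)
  qed
qed

lemma eventually_regime_conditions:
  fixes \<alpha> lam A \<beta> p :: real and k :: nat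
  assumes \<alpha>: "\<alpha> > 0" and lam: "lam > 0" and A: "A \<ge> 0" and k: "k \<ge> 2"
    and \<alpha>k: "(2 * real k - 1) * \<alpha> > 1" and \<beta>: "\<beta> > 0" and p: "p < 1"
  shows "\<forall>\<^sub>F n in sequentially. real n \<ge> 2 \<and> dd \<alpha> n \<ge> 2 \<and> (1 / dd \<alpha> n) ^ k < (1 - p) / 2
    \<and> A * ln (dd \<alpha> n) * (2 / dd \<alpha> n) ^ (k - 1)
        < dd \<alpha> n * (lam / (real n powr (1 - (real k - 1) * \<alpha>) * ln (dd \<alpha> n))) / 2 - 2 / real n
    \<and> A * ln (dd \<alpha> n) * dd \<alpha> n powr (- \<beta>) < ln 2 - 2 / real n
    \<and> 2 / real n < \<beta> * ln (dd \<alpha> n)"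
proof -
  have "\<forall>\<^sub>F x in at_top. x \<ge> 2 \<and> x powr \<alpha> \<ge> 2 \<and> (1 / x powr \<alpha>) ^ k < (1 - p) / 2
    \<and> A * ln (x powr \<alpha>) * (2 / x powr \<alpha>) ^ (k - 1)
        < x powr \<alpha> * (lam / (x powr (1 - (real k - 1) * \<alpha>) * ln (x powr \<alpha>))) / 2 - 2 / x
    \<and> A * ln (x powr \<alpha>) * (x powr \<alpha>) powr (- \<beta>) < ln 2 - 2 / x
    \<and> 2 / x < \<beta> * ln (x powr \<alpha>)"
  proof (intro eventually_conj)
    show "\<forall>\<^sub>F x in at_top. A * ln (x powr \<alpha>) * (2 / x powr \<alpha>) ^ (k - 1)
        < x powr \<alpha> * (lam / (x powr (1 - (real k - 1) * \<alpha>) * ln (x powr \<alpha>))) / 2 - 2 / x"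
      using \<alpha> lam A k \<alpha>k by (intro eventually_small_regime) auto
  qed (use \<alpha> \<beta> p k in real_asymp)+
  then show ?thesis
    unfolding dd_def by (rule eventually_compose_filterlim[OF _ filterlim_real_sequentially])
qed

lemma eventually_Phic_has_negative_derivative:
  fixes \<alpha> lam r p \<eta> :: real and k :: nat
  assumes \<alpha>: "\<alpha> > 0" and lam: "lam > 0" and k: "k \<ge> 2" and r: "r > 0" and p: "0 < p" "p < 1"
    and \<alpha>k: "(2 * real k - 1) * \<alpha> > 1" and \<eta>: "\<eta> \<le> 1"
    and \<eta>_small: "real k * p * r / (1 - p) * \<eta> ^ (k - 1) < 1 / 2"
  shows "\<forall>\<^sub>F n in sequentially. \<forall>z::real.
           real n * eta1 k \<alpha> lam n < z \<and> z < real n * \<eta> \<longrightarrow>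
           (\<exists>D. (Phic k p r \<alpha> n has_real_derivative D) (at z) \<and> D < 0)"
proof -
  define A where "A = 2 * (real k * p * r / (1 - p))"
  define \<beta> where "\<beta> = (1 - A * \<eta> ^ (k - 1)) / 2"
  have "A * \<eta> ^ (k - 1) < 1"
    using \<eta>_small by (simp add: A_def field_simps)
  then have \<beta>: "\<beta> > 0" and \<beta>_\<eta>: "A * \<eta> ^ (k - 1) \<le> 1 - 2 * \<beta>"
    by (simp_all add: \<beta>_def field_simps)
  have A: "A \<ge> 0"
    using p r by (simp add: A_def)
  show ?thesis
    using eventually_regime_conditions[OF \<alpha> lam A k \<alpha>k \<beta> p(2)]
  proof eventually_elim
    case (elim n)
    define \<delta> where "\<delta> = dd \<alpha> n * (lam / (real n powr (1 - (real k - 1) * \<alpha>) * ln (dd \<alpha> n)))"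
    from elim have n: "real n \<ge> 2" and d: "dd \<alpha> n \<ge> 2" and t: "(1 / dd \<alpha> n) ^ k < (1 - p) / 2"
      and small: "A * ln (dd \<alpha> n) * (2 / dd \<alpha> n) ^ (k - 1) < \<delta> / 2 - 2 / real n"
      and middle: "A * ln (dd \<alpha> n) * dd \<alpha> n powr (- \<beta>) < ln 2 - 2 / real n"
      and large: "2 / real n < \<beta> * ln (dd \<alpha> n)"
      unfolding \<delta>_def by auto
    have \<delta>: "\<delta> > 0"
      using n d lam by (simp add: \<delta>_def)
    have "real n * eta1 k \<alpha> lam n = real n * (1 + \<delta>) / dd \<alpha> n"
      using d by (simp add: eta1_def \<delta>_def field_simps)
    then show ?case
      using Phic_has_negative_derivative[OF n d k r p t A_def \<delta> \<eta> small middle \<beta>_\<eta> large] by simp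
  qed
qed

lemma alpha0_div_le_half:
  assumes "k \<ge> 2" "\<alpha> > 0" "real k * \<alpha> \<le> 1"
  shows "alpha0 k \<alpha> / \<alpha> \<le> 1 / 2"
  using assms by (simp add: alpha0_def field_simps)

theorem lemma4p4:
  fixes k :: nat and \<alpha> r p lam \<eta>2 \<eta>3 \<mu> :: real
  assumes k2: "k \<ge> 2" and apos: "\<alpha> > 0" and rpos: "r > 0"
    and p0: "0 < p" and p1: "p < 1"
    and A1: "(2 * real k - 1) * \<alpha> > 1" and A2: "real k * \<alpha> \<le> 1"
    and A3: "real k \<ge> tau p * ln (tau p) / (tau p - 1)"
    and A4: "r < r_cr p"
    and lam: "lam > 0"
    and eta: "0 < \<eta>2" "\<eta>2 < \<eta>3" "\<eta>3 < 1"
    and C1: "alpha0 k \<alpha> / \<alpha> - \<mu> * \<eta>2 ^ (k - 1) > 0"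
    and C2: "\<mu> > real k * p * r / (1 - p)"
    and C3: "r * ln (1 - p) + \<eta>3 > 0"
  shows "(\<forall>n \<ge> 2. \<forall>\<omega> \<in> {1..n}. Phic k p r \<alpha> n (real \<omega>) = Phi k p r \<alpha> n \<omega>)
       \<and> (\<forall>\<^sub>F n in sequentially. \<forall>z::real.
            real n * eta1 k \<alpha> lam n < z \<and> z < real n * \<eta>2 \<longrightarrow>
            (\<exists>D. (Phic k p r \<alpha> n has_real_derivative D) (at z) \<and> D < 0))"
proof (intro conjI)
  show "\<forall>n \<ge> 2. \<forall>\<omega> \<in> {1..n}. Phic k p r \<alpha> n (real \<omega>) = Phi k p r \<alpha> n \<omega>"
    using Phic_of_nat[OF _ apos] by simp
next
  have "real k * p * r / (1 - p) * \<eta>2 ^ (k - 1) < \<mu> * \<eta>2 ^ (k - 1)"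
    using C2 eta(1) by (intro mult_strict_right_mono) auto
  then have "real k * p * r / (1 - p) * \<eta>2 ^ (k - 1) < 1 / 2"
    using C1 alpha0_div_le_half[OF k2 apos A2] by linarith
  then show "\<forall>\<^sub>F n in sequentially. \<forall>z::real.
      real n * eta1 k \<alpha> lam n < z \<and> z < real n * \<eta>2 \<longrightarrow>
      (\<exists>D. (Phic k p r \<alpha> n has_real_derivative D) (at z) \<and> D < 0)"
    using eta by (intro eventually_Phic_has_negative_derivative[OF apos lam k2 rpos p0 p1 A1]) auto
qed

end
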